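(* Let $\varphi(z)=-1/\overline{z}$ and let $f:\mathbb{C}_\infty\to\mathbb{C}_\infty$ be a rational map of degree at least $2$ with $f\circ\varphi=\varphi\circ f$. If $\Omega$ is a forward invariant component of the Fatou set $F(f)$ (i.e. $f(\Omega)=\Omega$), then $W=\varphi(\Omega)$ is also a forward invariant component of $F(f)$, and $W$ is of the same type as $\Omega$ (attracting, super-attracting, parabolic, Siegel disk, or Herman ring).
   Context: The Fatou set $F(f)$ is the maximal open set on which $\{f^n\}$ is normal. A forward invariant Fatou component $\Omega$ is: an attracting component if it contains an attracting fixed point $\zeta$ ($0<|f'(\zeta)|<1$); a super-attracting component if it contains a fixed point with $f'(\zeta)=0$; a parabolic component if there is a fixed point $\zeta\in\partial\Omega$ with $f'(\zeta)$ a root of unity and $f^n\to\zeta$ on $\Omega$; a Siegel disk if $f|_\Omega$ is analytically conjugate to an irrational Euclidean rotation of the unit disk; a Herman ring if $f|_\Omega$ is analytically conjugate to an irrational Euclidean rotation of some round annulus. (Multipliers at $\infty$ are defined via conjugation by $1/z$.) Every forward invariant Fatou component of a rational map of degree $\ge2$ is of exactly one of these types. *)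

theory Defs
  imports "HOL-Analysis.Analysis" "HOL-Computational_Algebra.Polynomial"
begin

text \<open>The Riemann sphere is modelled as complex option, None being the point at infinity.\<close>

type_synonym csphere = "complex option"

fun sdist :: "csphere \<Rightarrow> csphere \<Rightarrow> real" where
  "sdist (Some z) (Some w) = 2 * cmod (z - w) / (sqrt (1 + (cmod z)\<^sup>2) * sqrt (1 + (cmod w)\<^sup>2))"
| "sdist (Some z) None = 2 / sqrt (1 + (cmod z)\<^sup>2)"
| "sdist None (Some w) = 2 / sqrt (1 + (cmod w)\<^sup>2)"
| "sdist None None = 0"

definition sopen :: "csphere set \<Rightarrow> bool" where
  "sopen U \<longleftrightarrow> (\<forall>x\<in>U. \<exists>e>0. {y. sdist x y < e} \<subseteq> U)"

lemma istopology_sopen: "istopology sopen"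
  unfolding istopology_def
proof (intro conjI allI impI)
  fix S T assume S: "sopen S" and T: "sopen T"
  show "sopen (S \<inter> T)"
    unfolding sopen_def
  proof
    fix x assume x: "x \<in> S \<inter> T"
    obtain e1 where e1: "e1 > 0" "{y. sdist x y < e1} \<subseteq> S"
      using S x unfolding sopen_def by blast
    obtain e2 where e2: "e2 > 0" "{y. sdist x y < e2} \<subseteq> T"
      using T x unfolding sopen_def by blast
    have "{y. sdist x y < min e1 e2} \<subseteq> S \<inter> T" using e1(2) e2(2) by auto
    moreover have "min e1 e2 > 0" using e1(1) e2(1) by simp
    ultimately show "\<exists>e>0. {y. sdist x y < e} \<subseteq> S \<inter> T" by blast
  qed
next
  fix K assume K: "\<forall>S\<in>K. sopen S"
  show "sopen (\<Union>K)"
    unfolding sopen_def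
  proof
    fix x assume "x \<in> \<Union>K"
    then obtain S where S: "S \<in> K" "x \<in> S" by blast
    then obtain e where "e > 0" "{y. sdist x y < e} \<subseteq> S"
      using K unfolding sopen_def by blast
    then show "\<exists>e>0. {y. sdist x y < e} \<subseteq> \<Union>K" using S(1) by blast
  qed
qed

definition sphere_top :: "csphere topology" where
  "sphere_top = topology sopen"

definition rat_eval :: "complex poly \<Rightarrow> complex poly \<Rightarrow> csphere \<Rightarrow> csphere" where
  "rat_eval p q x = (case x of
      Some z \<Rightarrow> (if poly q z = 0 then None else Some (poly p z / poly q z))
    | None \<Rightarrow> (if degree p > degree q then None else Some (coeff p (degree q) / lead_coeff q)))"

definition rational_map :: "(csphere \<Rightarrow> csphere) \<Rightarrow> nat \<Rightarrow> bool" where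
  "rational_map f d \<longleftrightarrow> (\<exists>p q. q \<noteq> 0 \<and> coprime p q \<and> max (degree p) (degree q) = d
                                 \<and> f = rat_eval p q)"

definition normal_iterates :: "(csphere \<Rightarrow> csphere) \<Rightarrow> csphere set \<Rightarrow> bool" where
  "normal_iterates f U \<longleftrightarrow>
     (\<forall>n :: nat \<Rightarrow> nat. \<exists>r g. strict_mono r \<and>
        (\<forall>x\<in>U. \<exists>V. sopen V \<and> x \<in> V \<and> V \<subseteq> U \<and>
           (\<forall>\<epsilon>>0. \<forall>\<^sub>F k in sequentially. \<forall>y\<in>V. sdist ((f ^^ n (r k)) y) (g y) < \<epsilon>)))"

definition fatou :: "(csphere \<Rightarrow> csphere) \<Rightarrow> csphere set" where
  "fatou f = \<Union>{U. sopen U \<and> normal_iterates f U}"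

definition fatou_components :: "(csphere \<Rightarrow> csphere) \<Rightarrow> csphere set set" where
  "fatou_components f = connected_components_of (subtopology sphere_top (fatou f))"

text \<open>Finite part (value at infinity irrelevant) and the chart change z \<mapsto> 1/z.\<close>
fun fin :: "csphere \<Rightarrow> complex" where
  "fin (Some z) = z" | "fin None = 0"

fun inv_s :: "csphere \<Rightarrow> csphere" where
  "inv_s None = Some 0"
| "inv_s (Some z) = (if z = 0 then None else Some (1 / z))"

definition multiplier :: "(csphere \<Rightarrow> csphere) \<Rightarrow> csphere \<Rightarrow> complex" where
  "multiplier f \<zeta> = (case \<zeta> of
      Some z \<Rightarrow> deriv (\<lambda>w. fin (f (Some w))) z
    | None \<Rightarrow> deriv (\<lambda>w. fin (inv_s (f (inv_s (Some w))))) 0)"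

definition sphere_holomorphic_on :: "(csphere \<Rightarrow> complex) \<Rightarrow> csphere set \<Rightarrow> bool" where
  "sphere_holomorphic_on h U \<longleftrightarrow>
     (\<lambda>z. h (Some z)) holomorphic_on {z. Some z \<in> U} \<and>
     (None \<in> U \<longrightarrow> (\<lambda>w. h (inv_s (Some w))) holomorphic_on {w. inv_s (Some w) \<in> U})"

definition irrational_rotation :: "real \<Rightarrow> bool" where
  "irrational_rotation \<theta> \<longleftrightarrow> \<theta> \<notin> \<rat>"

definition attracting_comp where
  "attracting_comp f \<Omega> \<longleftrightarrow> (\<exists>\<zeta>\<in>\<Omega>. f \<zeta> = \<zeta> \<and> 0 < cmod (multiplier f \<zeta>) \<and> cmod (multiplier f \<zeta>) < 1)"

definition superattracting_comp where
  "superattracting_comp f \<Omega> \<longleftrightarrow> (\<exists>\<zeta>\<in>\<Omega>. f \<zeta> = \<zeta> \<and> multiplier f \<zeta> = 0)"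

definition parabolic_comp where
  "parabolic_comp f \<Omega> \<longleftrightarrow> (\<exists>\<zeta>. \<zeta> \<in> sphere_top closure_of \<Omega> - \<Omega> \<and> f \<zeta> = \<zeta> \<and>
      (\<exists>m::nat. m \<ge> 1 \<and> (multiplier f \<zeta>) ^ m = 1) \<and>
      (\<forall>z\<in>\<Omega>. (\<lambda>n. sdist ((f ^^ n) z) \<zeta>) \<longlonglongrightarrow> 0))"

definition siegel_disk where
  "siegel_disk f \<Omega> \<longleftrightarrow> (\<exists>h \<theta>. irrational_rotation \<theta> \<and> sphere_holomorphic_on h \<Omega> \<and>
      bij_betw h \<Omega> (ball 0 1) \<and>
      (\<forall>z\<in>\<Omega>. h (f z) = exp (2 * pi * \<i> * complex_of_real \<theta>) * h z))"

definition herman_ring where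
  "herman_ring f \<Omega> \<longleftrightarrow> (\<exists>h \<theta> r R. 0 < r \<and> r < R \<and> irrational_rotation \<theta> \<and>
      sphere_holomorphic_on h \<Omega> \<and> bij_betw h \<Omega> {w. r < cmod w \<and> cmod w < R} \<and>
      (\<forall>z\<in>\<Omega>. h (f z) = exp (2 * pi * \<i> * complex_of_real \<theta>) * h z))"

datatype comp_type = Attracting | SuperAttracting | Parabolic | SiegelDisk | HermanRing

fun has_type :: "(csphere \<Rightarrow> csphere) \<Rightarrow> csphere set \<Rightarrow> comp_type \<Rightarrow> bool" where
  "has_type f \<Omega> Attracting = attracting_comp f \<Omega>"
| "has_type f \<Omega> SuperAttracting = superattracting_comp f \<Omega>"
| "has_type f \<Omega> Parabolic = parabolic_comp f \<Omega>"
| "has_type f \<Omega> SiegelDisk = siegel_disk f \<Omega>"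
| "has_type f \<Omega> HermanRing = herman_ring f \<Omega>"

fun phi :: "csphere \<Rightarrow> csphere" where
  "phi None = Some 0"
| "phi (Some z) = (if z = 0 then None else Some (- 1 / cnj z))"

end

theory Submission
  imports Defs
begin

text \<open>The map \<phi>(z) = -1/conj z factors as the chordal isometries z \<mapsto> -conj z and z \<mapsto> 1/z, so it is
  an isometric involution of the Riemann sphere. Commuting with f, it commutes with every iterate, hence
  transports normal families and maps the Fatou set, and with it the set of Fatou components, onto
  itself. Near a fixed point \<zeta> of f, in the charts at \<zeta> and \<phi>(\<zeta>), f is anticonformally conjugate
  to itself, so the multiplier at \<phi>(\<zeta>) is the complex conjugate of the one at \<zeta>; this preserves
  modulus and roots of unity. A linearisation h of a rotation domain by the angle \<theta> gives the
  linearisation conj \<circ> h \<circ> \<phi> of its image by the angle -\<theta>.\<close>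

lemma inv_s_inv_s [simp]: "inv_s (inv_s x) = x"
  by (cases x) auto

lemma phi_eq_inv_s_reflect: "phi x = inv_s (map_option (\<lambda>z. - cnj z) x)"
  by (cases x) (auto simp: divide_inverse)

lemma phi_phi [simp]: "phi (phi x) = x"
  by (cases x) auto

lemma inj_phi: "inj phi"
  by (metis injI phi_phi)

lemma phi_image_eq_vimage: "phi ` U = phi -` U"
  by (auto simp: image_iff) (metis phi_phi)

lemma mem_phi_image: "x \<in> phi ` U \<longleftrightarrow> phi x \<in> U"
  by (simp add: phi_image_eq_vimage)

lemma sdist_commute: "sdist x y = sdist y x"
  by (cases x; cases y) (auto simp: norm_minus_commute mult.commute)

lemma sdist_reflect: "sdist (map_option (\<lambda>z. - cnj z) x) (map_option (\<lambda>z. - cnj z) y) = sdist x y"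
proof -
  have "cmod (cnj w - cnj z) = cmod (z - w)" for z w :: complex
    by (metis complex_cnj_diff complex_mod_cnj norm_minus_commute)
  then show ?thesis
    by (cases x; cases y) auto
qed

lemma sqrt_one_plus_cmod_inverse:
  "z \<noteq> 0 \<Longrightarrow> sqrt (1 + (cmod (1 / z))\<^sup>2) = sqrt (1 + (cmod z)\<^sup>2) / cmod z"
  by (simp add: norm_divide power_divide field_simps real_sqrt_divide)

lemma sdist_inv_s: "sdist (inv_s x) (inv_s y) = sdist x y"
proof -
  have at_zero: "sdist (Some 0) (Some (1 / w)) = sdist None (Some w)"
    and at_infinity: "sdist None (Some (1 / w)) = sdist (Some 0) (Some w)" if "w \<noteq> 0" for w
    using that sqrt_one_plus_cmod_inverse[of w] by (simp_all add: norm_divide)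
  have generic: "sdist (Some (1 / z)) (Some (1 / w)) = sdist (Some z) (Some w)"
    if "z \<noteq> 0" "w \<noteq> 0" for z w
  proof -
    have "cmod (1 / z - 1 / w) = cmod (z - w) / (cmod z * cmod w)"
      using that by (simp add: field_simps norm_divide norm_mult norm_minus_commute)
    then show ?thesis
      using that by (simp add: sqrt_one_plus_cmod_inverse field_simps)
  qed
  have special: "sdist (inv_s x) (inv_s y) = sdist x y" if "x \<in> {None, Some 0}" for x y
    using that at_zero at_infinity by (cases y) (auto simp: sdist_commute)
  show ?thesis
  proof (cases "x \<in> {None, Some 0} \<or> y \<in> {None, Some 0}")
    case True
    then show ?thesis
      using special by (metis sdist_commute)
  next
    case False
    then obtain z w where "x = Some z" "y = Some w" "z \<noteq> 0" "w \<noteq> 0"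
      by (cases x; cases y) auto
    then show ?thesis
      using generic[of z w] by simp
  qed
qed

lemma sdist_phi [simp]: "sdist (phi x) (phi y) = sdist x y"
  by (simp add: phi_eq_inv_s_reflect sdist_inv_s sdist_reflect)

lemma openin_sphere_top: "openin sphere_top = sopen"
  unfolding sphere_top_def using istopology_sopen by simp

lemma topspace_sphere_top [simp]: "topspace sphere_top = UNIV"
proof -
  have "sopen UNIV"
    by (auto simp: sopen_def intro: exI[of _ 1])
  then show ?thesis
    unfolding topspace_def openin_sphere_top by blast
qed

lemma sopen_vimage_isometry:
  assumes "\<And>x y. sdist (h x) (h y) = sdist x y" and "sopen U"
  shows "sopen (h -` U)"
  unfolding sopen_def
proof
  fix x assume "x \<in> h -` U"
  then obtain e where "e > 0" and e: "{y. sdist (h x) y < e} \<subseteq> U"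
    using \<open>sopen U\<close> unfolding sopen_def by blast
  have "h y \<in> U" if "sdist x y < e" for y
    using e that assms(1)[of x y] by auto
  with \<open>e > 0\<close> show "\<exists>e>0. {y. sdist x y < e} \<subseteq> h -` U"
    by blast
qed

lemma sopen_phi_image: "sopen U \<Longrightarrow> sopen (phi ` U)"
  using sopen_vimage_isometry[of phi U] by (simp add: phi_image_eq_vimage)

lemma homeomorphic_map_phi: "homeomorphic_map sphere_top sphere_top phi"
proof (rule homeomorphic_map_involution)
  show "continuous_map sphere_top sphere_top phi"
    unfolding continuous_map_def openin_sphere_top
    using sopen_vimage_isometry[of phi] by (simp add: vimage_def)
qed simp

lemma phi_commute_apply:
  assumes "f \<circ> phi = phi \<circ> f"
  shows "f (phi x) = phi (f x)"
  using assms by (metis comp_apply)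

lemma funpow_phi_commute:
  assumes "f \<circ> phi = phi \<circ> f"
  shows "(f ^^ n) (phi x) = phi ((f ^^ n) x)"
  by (induction n) (simp_all add: phi_commute_apply[OF assms])

lemma normal_iterates_phi_image:
  assumes commute: "f \<circ> phi = phi \<circ> f" and normal: "normal_iterates f U"
  shows "normal_iterates f (phi ` U)"
  unfolding normal_iterates_def
proof
  fix n :: "nat \<Rightarrow> nat"
  obtain r g where "strict_mono r" and
    conv: "\<forall>x\<in>U. \<exists>V. sopen V \<and> x \<in> V \<and> V \<subseteq> U \<and>
           (\<forall>\<epsilon>>0. \<forall>\<^sub>F k in sequentially. \<forall>y\<in>V. sdist ((f ^^ n (r k)) y) (g y) < \<epsilon>)"
    using normal unfolding normal_iterates_def by blast
  have "\<exists>V. sopen V \<and> x \<in> V \<and> V \<subseteq> phi ` U \<and>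
          (\<forall>\<epsilon>>0. \<forall>\<^sub>F k in sequentially. \<forall>y\<in>V. sdist ((f ^^ n (r k)) y) (phi (g (phi y))) < \<epsilon>)"
    if "x \<in> phi ` U" for x
  proof -
    have "phi x \<in> U"
      using that by (simp add: mem_phi_image)
    then obtain V where V: "sopen V" "phi x \<in> V" "V \<subseteq> U"
      and conv_V: "\<forall>\<epsilon>>0. \<forall>\<^sub>F k in sequentially. \<forall>y\<in>V. sdist ((f ^^ n (r k)) y) (g y) < \<epsilon>"
      using conv by blast
    have "\<forall>\<^sub>F k in sequentially. \<forall>y\<in>phi ` V. sdist ((f ^^ n (r k)) y) (phi (g (phi y))) < \<epsilon>"
      if "\<epsilon> > 0" for \<epsilon>
    proof -
      from conv_V that have "\<forall>\<^sub>F k in sequentially. \<forall>y\<in>V. sdist ((f ^^ n (r k)) y) (g y) < \<epsilon>"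
        by blast
      then show ?thesis
        by (rule eventually_mono) (auto simp: funpow_phi_commute[OF commute])
    qed
    moreover have "sopen (phi ` V)" "x \<in> phi ` V" "phi ` V \<subseteq> phi ` U"
      using sopen_phi_image[OF V(1)] V(2,3) by (auto simp: phi_image_eq_vimage)
    ultimately show ?thesis
      by blast
  qed
  then show "\<exists>r g. strict_mono r \<and> (\<forall>x\<in>phi ` U. \<exists>V. sopen V \<and> x \<in> V \<and> V \<subseteq> phi ` U \<and>
           (\<forall>\<epsilon>>0. \<forall>\<^sub>F k in sequentially. \<forall>y\<in>V. sdist ((f ^^ n (r k)) y) (g y) < \<epsilon>))"
    using \<open>strict_mono r\<close> by (intro exI[of _ r] exI[of _ "\<lambda>y. phi (g (phi y))"]) simp
qed

lemma phi_image_fatou: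
  assumes "f \<circ> phi = phi \<circ> f"
  shows "phi ` fatou f = fatou f"
proof -
  have subset: "phi ` fatou f \<subseteq> fatou f"
    unfolding fatou_def using sopen_phi_image normal_iterates_phi_image[OF assms] by blast
  then have "phi ` phi ` fatou f \<subseteq> phi ` fatou f"
    by (rule image_mono)
  then have "fatou f \<subseteq> phi ` fatou f"
    by (simp add: image_image)
  with subset show ?thesis by blast
qed

lemma phi_image_fatou_component:
  assumes "f \<circ> phi = phi \<circ> f" and "\<Omega> \<in> fatou_components f"
  shows "phi ` \<Omega> \<in> fatou_components f"
proof -
  have "homeomorphic_map (subtopology sphere_top (fatou f)) (subtopology sphere_top (fatou f)) phi"
    by (rule homeomorphic_map_subtopologies[OF homeomorphic_map_phi])
       (simp add: phi_image_fatou[OF assms(1)])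
  then show ?thesis
    using homeomorphic_map_connected_components_of assms(2) unfolding fatou_components_def by blast
qed

lemma eventually_nhds_compose:
  fixes g :: "'a::t2_space \<Rightarrow> 'b::topological_space"
  assumes "isCont g a" and "eventually P (nhds (g a))"
  shows "eventually (\<lambda>x. P (g x)) (nhds a)"
proof -
  have "\<forall>\<^sub>F x in at a. P (g x)"
    using assms unfolding isCont_def filterlim_iff by blast
  moreover have "P (g a)"
    using assms(2) by (rule eventually_nhds_x_imp_x)
  ultimately show ?thesis
    by (simp add: eventually_nhds_conv_at)
qed

lemma eventually_nhds_nonzero: "(z::'a::real_normed_vector) \<noteq> 0 \<Longrightarrow> \<forall>\<^sub>F w in nhds z. w \<noteq> 0"
  using eventually_nhds_in_open[of "- {0}" z] by auto

lemma rat_eval_finite_near: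
  assumes "rat_eval p q (Some z) \<noteq> None"
  shows "\<forall>\<^sub>F w in nhds z. rat_eval p q (Some w) = Some (poly p w / poly q w)"
proof -
  have "poly q z \<noteq> 0"
    using assms by (auto simp: rat_eval_def)
  then have "\<forall>\<^sub>F w in nhds z. poly q w \<noteq> 0"
    using eventually_nhds_compose[where g = "poly q" and a = z and P = "\<lambda>v. v \<noteq> 0"]
      eventually_nhds_nonzero[of "poly q z"] by simp
  then show ?thesis
    by (rule eventually_mono) (simp add: rat_eval_def)
qed

lemma rat_eval_finite_chart_differentiable:
  assumes "rat_eval p q (Some z) \<noteq> None"
  shows "(\<lambda>w. fin (rat_eval p q (Some w))) field_differentiable at z"
proof -
  have "poly q z \<noteq> 0"
    using assms by (auto simp: rat_eval_def)
  from DERIV_divide[OF poly_DERIV poly_DERIV this]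
  obtain D where D: "((\<lambda>w. poly p w / poly q w) has_field_derivative D) (at z)"
    by blast
  have ev: "\<forall>\<^sub>F w in nhds z. poly p w / poly q w = fin (rat_eval p q (Some w))"
    using rat_eval_finite_near[OF assms] by (rule eventually_mono) simp
  have "((\<lambda>w. fin (rat_eval p q (Some w))) has_field_derivative D) (at z)"
    using D DERIV_cong_ev[OF refl ev refl] by blast
  then show ?thesis
    unfolding field_differentiable_def by blast
qed

text \<open>In applications \<sigma> is a holomorphic involution with \<sigma> a = z, so that \<open>t * s = 1\<close> is the
  chain rule for \<sigma> \<circ> \<sigma> = id; the map in the conclusion is then the anticonformal conjugate of F.\<close>

lemma has_field_derivative_anticonjugate:
  assumes F: "(F has_field_derivative D) (at z)" and "F z = z"
    and \<sigma>: "(\<sigma> has_field_derivative s) (at a)" "(\<sigma> has_field_derivative t) (at z)"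
    and "\<sigma> a = z" and "t * s = 1"
  shows "((\<lambda>w. cnj (\<sigma> (F (\<sigma> (cnj w))))) has_field_derivative cnj D) (at (cnj a))"
proof -
  have F': "(F has_field_derivative D) (at (\<sigma> a))" and \<sigma>': "(\<sigma> has_field_derivative t) (at (F (\<sigma> a)))"
    using F \<sigma>(2) by (simp_all add: assms)
  have "((\<lambda>v. F (\<sigma> v)) has_field_derivative D * s) (at a)"
    using F' \<sigma>(1) by (rule DERIV_chain2)
  then have "((\<lambda>v. \<sigma> (F (\<sigma> v))) has_field_derivative t * (D * s)) (at a)"
    by (rule DERIV_chain2[where f = \<sigma> and g = "\<lambda>v. F (\<sigma> v)", OF \<sigma>'])
  moreover have "t * (D * s) = D"
    using \<open>t * s = 1\<close> by (metis mult.commute mult.left_commute mult_1_right)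
  ultimately have "((\<lambda>v. \<sigma> (F (\<sigma> v))) has_field_derivative D) (at (cnj (cnj a)))"
    by simp
  then have "((cnj \<circ> (\<lambda>v. \<sigma> (F (\<sigma> v))) \<circ> cnj) has_field_derivative cnj D) (at (cnj a))"
    by (rule has_field_derivative_cnj_cnj)
  then show ?thesis
    by (simp add: o_def)
qed

lemma inv_s_phi: "inv_s (phi x) = map_option (\<lambda>z. - cnj z) x"
  by (simp add: phi_eq_inv_s_reflect)

lemma rat_eval_phi_conjugate_near:
  assumes commute: "f \<circ> phi = phi \<circ> f" and f: "f = rat_eval p q"
    and fixed: "f (Some z) = Some z" and "z \<noteq> 0"
  shows "\<forall>\<^sub>F w in nhds (-1 / cnj z). fin (f (Some w)) = -1 / cnj (fin (f (Some (-1 / cnj w))))"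
proof -
  define F where "F = (\<lambda>w. fin (f (Some w)))"
  have "\<forall>\<^sub>F u in nhds z. f (Some u) = Some (F u)"
    using rat_eval_finite_near[of p q z] fixed by (auto simp: f F_def elim: eventually_mono)
  moreover have "isCont F z"
    using rat_eval_finite_chart_differentiable[of p q z] fixed
    by (simp add: f F_def field_differentiable_imp_continuous_at)
  then have "\<forall>\<^sub>F u in nhds z. F u \<noteq> 0"
    using eventually_nhds_compose[where g = F and P = "\<lambda>v. v \<noteq> 0"]
      eventually_nhds_nonzero[OF \<open>z \<noteq> 0\<close>] fixed by (simp add: F_def)
  ultimately have near_z: "\<forall>\<^sub>F u in nhds z. f (Some u) = Some (F u) \<and> F u \<noteq> 0"
    by (rule eventually_conj)
  have "isCont (\<lambda>w. -1 / cnj w) (-1 / cnj z)"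
    using \<open>z \<noteq> 0\<close> by (auto intro!: continuous_intros)
  then have "\<forall>\<^sub>F w in nhds (-1 / cnj z). f (Some (-1 / cnj w)) = Some (F (-1 / cnj w)) \<and> F (-1 / cnj w) \<noteq> 0"
    using eventually_nhds_compose[where P = "\<lambda>u. f (Some u) = Some (F u) \<and> F u \<noteq> 0"] near_z
    by fastforce
  moreover have "\<forall>\<^sub>F w in nhds (-1 / cnj z). w \<noteq> 0"
    using \<open>z \<noteq> 0\<close> by (simp add: eventually_nhds_nonzero)
  ultimately show ?thesis
  proof (rule eventually_elim2)
    fix w assume w: "f (Some (-1 / cnj w)) = Some (F (-1 / cnj w)) \<and> F (-1 / cnj w) \<noteq> 0" "w \<noteq> 0"
    have "Some w = phi (Some (-1 / cnj w))"
      using w(2) by simp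
    then have "f (Some w) = phi (Some (F (-1 / cnj w)))"
      using w(1) phi_commute_apply[OF commute] by metis
    then show "fin (f (Some w)) = -1 / cnj (fin (f (Some (-1 / cnj w))))"
      using w(1) by (simp add: F_def)
  qed
qed

lemma multiplier_phi_finite:
  assumes commute: "f \<circ> phi = phi \<circ> f" and f: "f = rat_eval p q"
    and fixed: "f (Some z) = Some z" and "z \<noteq> 0"
  shows "multiplier f (Some (-1 / cnj z)) = cnj (multiplier f (Some z))"
proof -
  define F where "F = (\<lambda>w. fin (f (Some w)))"
  define \<sigma> :: "complex \<Rightarrow> complex" where "\<sigma> = (\<lambda>v. -1 / v)"
  have F: "(F has_field_derivative multiplier f (Some z)) (at z)" and "F z = z"
    using rat_eval_finite_chart_differentiable[of p q z] fixed
    by (simp_all add: f F_def multiplier_def DERIV_deriv_iff_field_differentiable)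
  have "(\<sigma> has_field_derivative z\<^sup>2) (at (-1 / z))" "(\<sigma> has_field_derivative 1 / z\<^sup>2) (at z)"
    unfolding \<sigma>_def using \<open>z \<noteq> 0\<close>
    by (auto simp: power2_eq_square field_simps intro!: derivative_eq_intros)
  from has_field_derivative_anticonjugate[OF F \<open>F z = z\<close> this]
  have "((\<lambda>w. cnj (\<sigma> (F (\<sigma> (cnj w))))) has_field_derivative cnj (multiplier f (Some z))) (at (-1 / cnj z))"
    using \<open>z \<noteq> 0\<close> by (simp add: \<sigma>_def)
  moreover have "(\<lambda>w. cnj (\<sigma> (F (\<sigma> (cnj w))))) = (\<lambda>w. -1 / cnj (fin (f (Some (-1 / cnj w)))))"
    by (simp add: \<sigma>_def F_def)
  ultimately have "((\<lambda>w. fin (f (Some w))) has_field_derivative cnj (multiplier f (Some z))) (at (-1 / cnj z))"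
    using DERIV_cong_ev[OF refl rat_eval_phi_conjugate_near[OF assms] refl] by simp
  then show ?thesis
    unfolding multiplier_def by (simp add: DERIV_imp_deriv)
qed

lemma rat_eval_phi_conjugate_near_infinity:
  assumes commute: "f \<circ> phi = phi \<circ> f" and f: "f = rat_eval p q" and fixed: "f None = None"
  shows "\<forall>\<^sub>F u in nhds 0. fin (inv_s (f (inv_s (Some u)))) = - cnj (fin (f (Some (- cnj u))))"
proof -
  have "f (Some 0) = Some 0"
    using phi_commute_apply[OF commute, of None] fixed by simp
  then have "\<forall>\<^sub>F v in nhds 0. f (Some v) = Some (fin (f (Some v)))"
    using rat_eval_finite_near[of p q 0] by (auto simp: f elim: eventually_mono)
  moreover have "isCont (\<lambda>w. - cnj w) 0"
    by (intro continuous_intros)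
  ultimately have "\<forall>\<^sub>F u in nhds 0. f (Some (- cnj u)) = Some (fin (f (Some (- cnj u))))"
    using eventually_nhds_compose[where g = "\<lambda>w. - cnj w" and a = 0] by simp
  then show ?thesis
  proof (rule eventually_mono)
    fix u assume u: "f (Some (- cnj u)) = Some (fin (f (Some (- cnj u))))"
    show "fin (inv_s (f (inv_s (Some u)))) = - cnj (fin (f (Some (- cnj u))))"
    proof (cases "u = 0")
      case True
      then show ?thesis
        using fixed \<open>f (Some 0) = Some 0\<close> by simp
    next
      case False
      then have "inv_s (Some u) = phi (Some (- cnj u))"
        by (simp add: divide_inverse)
      then have "inv_s (f (inv_s (Some u))) = inv_s (phi (Some (fin (f (Some (- cnj u))))))"
        using u phi_commute_apply[OF commute] by metis
      then show ?thesis
        by (simp add: inv_s_phi)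
    qed
  qed
qed

lemma multiplier_phi_infinity:
  assumes commute: "f \<circ> phi = phi \<circ> f" and f: "f = rat_eval p q" and fixed: "f None = None"
  shows "multiplier f None = cnj (multiplier f (Some 0))"
proof -
  define F where "F = (\<lambda>w. fin (f (Some w)))"
  have "f (Some 0) = Some 0"
    using phi_commute_apply[OF commute, of None] fixed by simp
  then have F: "(F has_field_derivative multiplier f (Some 0)) (at 0)" and "F 0 = 0"
    using rat_eval_finite_chart_differentiable[of p q 0]
    by (simp_all add: f F_def multiplier_def DERIV_deriv_iff_field_differentiable)
  have "((\<lambda>u. cnj (- F (- cnj u))) has_field_derivative cnj (multiplier f (Some 0))) (at (cnj 0))"
    by (rule has_field_derivative_anticonjugate[OF F \<open>F 0 = 0\<close>, where \<sigma> = uminus and s = "-1" and t = "-1"])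
       (auto intro!: derivative_eq_intros)
  then have "((\<lambda>u. fin (inv_s (f (inv_s (Some u))))) has_field_derivative cnj (multiplier f (Some 0))) (at 0)"
    using DERIV_cong_ev[OF refl rat_eval_phi_conjugate_near_infinity[OF assms] refl] by (simp add: F_def)
  then show ?thesis
    unfolding multiplier_def by (simp add: DERIV_imp_deriv)
qed

lemma multiplier_phi:
  assumes commute: "f \<circ> phi = phi \<circ> f" and f: "f = rat_eval p q" and fixed: "f \<zeta> = \<zeta>"
  shows "multiplier f (phi \<zeta>) = cnj (multiplier f \<zeta>)"
proof (cases \<zeta>)
  case None
  then show ?thesis
    using multiplier_phi_infinity[OF commute f] fixed by simp
next
  case (Some z)
  show ?thesis
  proof (cases "z = 0")
    case True
    have "f None = None"
      using phi_commute_apply[OF commute, of "Some 0"] fixed Some True by simp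
    then show ?thesis
      using multiplier_phi_infinity[OF commute f] Some True by simp
  next
    case False
    then show ?thesis
      using multiplier_phi_finite[OF commute f _ False] fixed Some by simp
  qed
qed

lemma has_field_derivative_cnj_cnj_within:
  assumes "(f has_field_derivative D) (at (cnj z) within cnj ` S)"
  shows "((\<lambda>x. cnj (f (cnj x))) has_field_derivative cnj D) (at z within S)"
proof -
  have "(cnj has_derivative cnj) (at z within S)"
    by (rule bounded_linear_imp_has_derivative[OF bounded_linear_cnj])
  moreover have "(f has_derivative (\<lambda>h. D * h)) (at (cnj z) within cnj ` S)"
    using assms unfolding has_field_derivative_def .
  ultimately have "((\<lambda>x. f (cnj x)) has_derivative (\<lambda>h. D * cnj h)) (at z within S)"
    by (rule has_derivative_in_compose)
  then have "((\<lambda>x. cnj (f (cnj x))) has_derivative (\<lambda>h. cnj (D * cnj h))) (at z within S)"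
    by (rule has_derivative_cnj)
  moreover have "(\<lambda>h. cnj (D * cnj h)) = (\<lambda>h. cnj D * h)"
    by (simp add: fun_eq_iff)
  ultimately show ?thesis
    unfolding has_field_derivative_def by simp
qed

lemma holomorphic_on_cnj_cnj_image:
  assumes "g holomorphic_on T"
  shows "(\<lambda>z. cnj (g (cnj z))) holomorphic_on (cnj ` T)"
  unfolding holomorphic_on_def field_differentiable_def
proof
  fix x assume "x \<in> cnj ` T"
  then have "cnj x \<in> T" and image: "cnj ` cnj ` T = T"
    by (auto simp: image_image)
  then obtain D where "(g has_field_derivative D) (at (cnj x) within cnj ` cnj ` T)"
    using assms unfolding holomorphic_on_def field_differentiable_def by auto
  then show "\<exists>D. ((\<lambda>z. cnj (g (cnj z))) has_field_derivative D) (at x within cnj ` T)"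
    using has_field_derivative_cnj_cnj_within by blast
qed

lemma holomorphic_on_cnj_compose:
  assumes g: "g holomorphic_on T" and k: "k holomorphic_on S"
    and maps: "\<And>z. z \<in> S \<Longrightarrow> cnj (k z) \<in> T"
    and eq: "\<And>z. z \<in> S \<Longrightarrow> h z = cnj (g (cnj (k z)))"
  shows "h holomorphic_on S"
proof -
  have "k ` S \<subseteq> cnj ` T"
    using maps by (metis complex_cnj_cnj image_eqI image_subsetI)
  then have "(\<lambda>z. cnj (g (cnj z))) \<circ> k holomorphic_on S"
    by (rule holomorphic_on_compose_gen[OF k holomorphic_on_cnj_cnj_image[OF g]])
  then show ?thesis
    by (rule holomorphic_transform) (simp add: eq)
qed

lemma sphere_holomorphic_on_phi:
  assumes "sphere_holomorphic_on h \<Omega>"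
  shows "sphere_holomorphic_on (\<lambda>x. cnj (h (phi x))) (phi ` \<Omega>)"
proof -
  have finite_chart: "(\<lambda>z. h (Some z)) holomorphic_on {z. Some z \<in> \<Omega>}"
    and infinite_chart: "None \<in> \<Omega> \<Longrightarrow> (\<lambda>w. h (inv_s (Some w))) holomorphic_on {w. inv_s (Some w) \<in> \<Omega>}"
    using assms unfolding sphere_holomorphic_on_def by blast+
  have phi_Some: "phi (Some z) = inv_s (Some (cnj (- z)))" for z
    by (simp add: phi_eq_inv_s_reflect)
  have phi_Some_nonzero: "phi (Some z) = Some (cnj (-1 / z))" if "z \<noteq> 0" for z
    using that by simp
  have phi_inv_s: "phi (inv_s (Some w)) = Some (cnj (- w))" for w
    by (simp add: phi_eq_inv_s_reflect)
  have "(\<lambda>z. cnj (h (phi (Some z)))) holomorphic_on {z. Some z \<in> phi ` \<Omega>}"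
  proof (cases "None \<in> \<Omega>")
    case True
    show ?thesis
    proof (rule holomorphic_on_cnj_compose[OF infinite_chart[OF True], where k = "\<lambda>z. - z"])
      fix z assume "z \<in> {z. Some z \<in> phi ` \<Omega>}"
      then show "cnj (- z) \<in> {w. inv_s (Some w) \<in> \<Omega>}"
        unfolding mem_Collect_eq mem_phi_image phi_Some .
      show "cnj (h (phi (Some z))) = cnj (h (inv_s (Some (cnj (- z)))))"
        by (simp only: phi_Some)
    qed (intro holomorphic_intros)
  next
    case False
    then have nonzero: "z \<noteq> 0" if "z \<in> {z. Some z \<in> phi ` \<Omega>}" for z
      using that by (auto simp: mem_phi_image)
    show ?thesis
    proof (rule holomorphic_on_cnj_compose[OF finite_chart, where k = "\<lambda>z. -1 / z"])
      fix z assume z: "z \<in> {z. Some z \<in> phi ` \<Omega>}"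
      then show "cnj (-1 / z) \<in> {z. Some z \<in> \<Omega>}"
        unfolding mem_Collect_eq mem_phi_image phi_Some_nonzero[OF nonzero[OF z]] .
      show "cnj (h (phi (Some z))) = cnj (h (Some (cnj (-1 / z))))"
        by (simp only: phi_Some_nonzero[OF nonzero[OF z]] complex_cnj_cnj)
    qed (use nonzero in \<open>auto intro!: holomorphic_intros\<close>)
  qed
  moreover have "(\<lambda>w. cnj (h (phi (inv_s (Some w))))) holomorphic_on {w. inv_s (Some w) \<in> phi ` \<Omega>}"
  proof (rule holomorphic_on_cnj_compose[OF finite_chart, where k = "\<lambda>w. - w"])
    fix w assume "w \<in> {w. inv_s (Some w) \<in> phi ` \<Omega>}"
    then show "cnj (- w) \<in> {z. Some z \<in> \<Omega>}"
      unfolding mem_Collect_eq mem_phi_image phi_inv_s .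
    show "cnj (h (phi (inv_s (Some w)))) = cnj (h (Some (cnj (- w))))"
      by (simp only: phi_inv_s)
  qed (intro holomorphic_intros)
  ultimately show ?thesis
    unfolding sphere_holomorphic_on_def by blast
qed

lemma bij_betw_cnj_phi:
  assumes "bij_betw h \<Omega> A" and "cnj ` A = A"
  shows "bij_betw (\<lambda>x. cnj (h (phi x))) (phi ` \<Omega>) A"
proof -
  have "bij_betw phi (phi ` \<Omega>) \<Omega>"
    by (rule bij_betw_imageI) (auto simp: image_image intro: inj_on_subset[OF inj_phi])
  moreover have "bij_betw cnj A A"
    using assms(2) by (intro bij_betw_imageI) (auto intro: inj_onI)
  ultimately have "bij_betw (cnj \<circ> h \<circ> phi) (phi ` \<Omega>) A"
    using assms(1) by (metis bij_betw_trans)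
  then show ?thesis
    by (simp add: o_def)
qed

lemma cnj_image_norm_set: "cnj ` {w. P (cmod w)} = {w. P (cmod w)}"
proof -
  have "w \<in> cnj ` {w. P (cmod w)}" if "P (cmod w)" for w
    using that by (intro image_eqI[of w cnj "cnj w"]) auto
  then show ?thesis
    by auto
qed

lemma cnj_image_ball_0: "cnj ` ball 0 r = ball 0 r"
  using cnj_image_norm_set[of "\<lambda>t. t < r"] by (simp add: ball_def dist_norm)

lemma rotation_cnj_phi:
  assumes commute: "f \<circ> phi = phi \<circ> f"
    and rotation: "\<forall>z\<in>\<Omega>. h (f z) = exp (2 * pi * \<i> * complex_of_real \<theta>) * h z"
  shows "\<forall>z\<in>phi ` \<Omega>. cnj (h (phi (f z))) = exp (2 * pi * \<i> * complex_of_real (- \<theta>)) * cnj (h (phi z))"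
proof
  fix z assume "z \<in> phi ` \<Omega>"
  then have "phi z \<in> \<Omega>"
    by (simp add: mem_phi_image)
  moreover have "phi (f z) = f (phi z)"
    by (metis phi_commute_apply[OF commute] phi_phi)
  ultimately show "cnj (h (phi (f z))) = exp (2 * pi * \<i> * complex_of_real (- \<theta>)) * cnj (h (phi z))"
    using rotation by (simp add: exp_cnj)
qed

lemma closure_of_phi_image: "sphere_top closure_of (phi ` U) = phi ` (sphere_top closure_of U)"
  by (rule homeomorphic_map_closure_of[OF homeomorphic_map_phi]) simp

lemma attracting_comp_phi_image:
  assumes commute: "f \<circ> phi = phi \<circ> f" and f: "f = rat_eval p q" and "attracting_comp f \<Omega>"
  shows "attracting_comp f (phi ` \<Omega>)"
proof -
  obtain \<zeta> where "\<zeta> \<in> \<Omega>" "f \<zeta> = \<zeta>" "0 < cmod (multiplier f \<zeta>)" "cmod (multiplier f \<zeta>) < 1"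
    using assms(3) by (auto simp: attracting_comp_def)
  then show ?thesis
    unfolding attracting_comp_def
    using multiplier_phi[OF commute f] phi_commute_apply[OF commute, of \<zeta>]
    by (intro bexI[of _ "phi \<zeta>"]) auto
qed

lemma superattracting_comp_phi_image:
  assumes commute: "f \<circ> phi = phi \<circ> f" and f: "f = rat_eval p q" and "superattracting_comp f \<Omega>"
  shows "superattracting_comp f (phi ` \<Omega>)"
proof -
  obtain \<zeta> where "\<zeta> \<in> \<Omega>" "f \<zeta> = \<zeta>" "multiplier f \<zeta> = 0"
    using assms(3) by (auto simp: superattracting_comp_def)
  then show ?thesis
    unfolding superattracting_comp_def
    using multiplier_phi[OF commute f] phi_commute_apply[OF commute, of \<zeta>]
    by (intro bexI[of _ "phi \<zeta>"]) auto
qed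

lemma parabolic_comp_phi_image:
  assumes commute: "f \<circ> phi = phi \<circ> f" and f: "f = rat_eval p q" and "parabolic_comp f \<Omega>"
  shows "parabolic_comp f (phi ` \<Omega>)"
proof -
  obtain \<zeta> m where \<zeta>: "\<zeta> \<in> sphere_top closure_of \<Omega> - \<Omega>" "f \<zeta> = \<zeta>"
    "m \<ge> 1" "(multiplier f \<zeta>) ^ m = 1"
    and converges: "\<forall>z\<in>\<Omega>. (\<lambda>n. sdist ((f ^^ n) z) \<zeta>) \<longlonglongrightarrow> 0"
    using assms(3) by (auto simp: parabolic_comp_def)
  have "phi \<zeta> \<in> sphere_top closure_of (phi ` \<Omega>) - phi ` \<Omega>"
    using \<zeta>(1) by (auto simp: closure_of_phi_image mem_phi_image)
  moreover have "f (phi \<zeta>) = phi \<zeta>"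
    using phi_commute_apply[OF commute] \<zeta>(2) by simp
  moreover have "(multiplier f (phi \<zeta>)) ^ m = 1"
    using multiplier_phi[OF commute f \<zeta>(2)] \<zeta>(4) by (metis complex_cnj_one complex_cnj_power)
  moreover have "\<forall>z\<in>phi ` \<Omega>. (\<lambda>n. sdist ((f ^^ n) z) (phi \<zeta>)) \<longlonglongrightarrow> 0"
    using converges by (auto simp: funpow_phi_commute[OF commute])
  ultimately show ?thesis
    unfolding parabolic_comp_def using \<zeta>(3) by blast
qed

lemma siegel_disk_phi_image:
  assumes commute: "f \<circ> phi = phi \<circ> f" and "siegel_disk f \<Omega>"
  shows "siegel_disk f (phi ` \<Omega>)"
proof -
  obtain h \<theta> where "irrational_rotation \<theta>" "sphere_holomorphic_on h \<Omega>"
    "bij_betw h \<Omega> (ball 0 1)" "\<forall>z\<in>\<Omega>. h (f z) = exp (2 * pi * \<i> * complex_of_real \<theta>) * h z"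
    using assms(2) by (auto simp: siegel_disk_def)
  then show ?thesis
    unfolding siegel_disk_def
    using sphere_holomorphic_on_phi bij_betw_cnj_phi[OF _ cnj_image_ball_0] rotation_cnj_phi[OF commute]
    by (intro exI[of _ "\<lambda>x. cnj (h (phi x))"] exI[of _ "- \<theta>"]) (auto simp: irrational_rotation_def)
qed

lemma herman_ring_phi_image:
  assumes commute: "f \<circ> phi = phi \<circ> f" and "herman_ring f \<Omega>"
  shows "herman_ring f (phi ` \<Omega>)"
proof -
  obtain h \<theta> r R where "0 < r" "r < R" "irrational_rotation \<theta>" "sphere_holomorphic_on h \<Omega>"
    "bij_betw h \<Omega> {w. r < cmod w \<and> cmod w < R}"
    "\<forall>z\<in>\<Omega>. h (f z) = exp (2 * pi * \<i> * complex_of_real \<theta>) * h z"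
    using assms(2) by (auto simp: herman_ring_def)
  then show ?thesis
    unfolding herman_ring_def
    using sphere_holomorphic_on_phi bij_betw_cnj_phi[OF _ cnj_image_norm_set] rotation_cnj_phi[OF commute]
    by (intro exI[of _ "\<lambda>x. cnj (h (phi x))"] exI[of _ "- \<theta>"] exI[of _ r] exI[of _ R])
       (auto simp: irrational_rotation_def)
qed

lemma has_type_phi_image:
  assumes "f \<circ> phi = phi \<circ> f" and "f = rat_eval p q" and "has_type f \<Omega> T"
  shows "has_type f (phi ` \<Omega>) T"
  using assms
  by (cases T) (simp_all add: attracting_comp_phi_image superattracting_comp_phi_image
                  parabolic_comp_phi_image siegel_disk_phi_image herman_ring_phi_image)

theorem mainTheorem2:
  fixes f :: "csphere \<Rightarrow> csphere" and d :: nat and \<Omega> :: "csphere set"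
  assumes "rational_map f d" and "d \<ge> 2"
    and "f \<circ> phi = phi \<circ> f"
    and "\<Omega> \<in> fatou_components f" and "f ` \<Omega> = \<Omega>"
  shows "phi ` \<Omega> \<in> fatou_components f \<and> f ` (phi ` \<Omega>) = phi ` \<Omega> \<and>
         (\<forall>T. has_type f (phi ` \<Omega>) T \<longleftrightarrow> has_type f \<Omega> T)"
proof -
  obtain p q where f: "f = rat_eval p q"
    using assms(1) unfolding rational_map_def by blast
  have "f ` phi ` \<Omega> = phi ` f ` \<Omega>"
    using assms(3) by (metis image_comp)
  then have "f ` phi ` \<Omega> = phi ` \<Omega>"
    using assms(5) by simp
  moreover have "has_type f (phi ` \<Omega>) T \<longleftrightarrow> has_type f \<Omega> T" for T
    using has_type_phi_image[OF assms(3) f, of \<Omega> T] has_type_phi_image[OF assms(3) f, of "phi ` \<Omega>" T]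
    by (auto simp: image_image)
  ultimately show ?thesis
    using phi_image_fatou_component[OF assms(3,4)] by blast
qed

end
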